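(* Let $\mathcal A=\mathbb CS_3\cong M_2(\mathbb C)\oplus\mathbb C\oplus\mathbb C$ with its Hopf algebra structure $\Delta g=g\otimes g$, $\epsilon(g)=1$, $S(g)=g^{-1}$. Let $(\mathcal A,\mathcal H,\pi,J,\gamma)$ be any finite complex spectral triple with Dirac operator $D$ whose first-order calculus $(\Omega^1_D,d_D)$, $\Omega^1_D=\mathrm{span}\{\pi(a)[D,\pi(b)]\}$, $d_Da=[D,\pi(a)]$, is nonzero. Then $(\Omega^1_D,d_D)$ is not isomorphic (as an $\mathcal A$-bimodule with derivation) to any bicovariant first-order differential calculus over the Hopf algebra $\mathbb CS_3$.
   Context: A finite complex spectral triple over $\mathcal A=\bigoplus_i M_{n_i}(\mathbb C)$: a finite-dimensional Hilbert space $\mathcal H$, a faithful $*$-representation $\pi$, an antilinear isometry $J$ with $J^2=1$ such that $\pi^0(a):=J\pi(a)^*J$ is a representation of the opposite algebra commuting with $\pi(\mathcal A)$, and a grading $\gamma=\gamma^*$, $\gamma^2=1$, commuting with $J$ and $\pi(\mathcal A)$ and of the form $\sum_m\pi(x_m)\pi^0(y_m)$. A Dirac operator is a self-adjoint $D$ with $DJ=JD$, $D\gamma=-\gamma D$, $[[D,\pi(a)],\pi^0(b)]=0$ for all $a,b$. Here $\mathcal A$-bimodule structure on $\Omega^1_D$ is via $\pi$ (left and right operator multiplication), with the identification $\mathbb CS_3\cong M_2(\mathbb C)\oplus\mathbb C\oplus\mathbb C$ given by the direct sum of the 2-dimensional irreducible, trivial and sign representations of $S_3$. A first-order differential calculus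 $(\Omega^1,d)$ over a Hopf algebra $\mathcal B$ is bicovariant (in Woronowicz's sense) if there are a left coaction $\Delta_L:\Omega^1\to\mathcal B\otimes\Omega^1$ and a right coaction $\Delta_R:\Omega^1\to\Omega^1\otimes\mathcal B$, commuting with each other, making $\Omega^1$ a bicovariant bimodule, such that $\Delta_L(x\,dy)=\Delta(x)(\mathrm{id}\otimes d)\Delta(y)$ and $\Delta_R(x\,dy)=\Delta(x)(d\otimes\mathrm{id})\Delta(y)$. *)

theory Defs
  imports "HOL-Analysis.Analysis" "HOL-Combinatorics.Permutations"
begin

text \<open>An element of the group algebra CS3 is a
  complex function on S3 (extended by 0 outside S3): a = sum_g a(g) g.\<close>

definition S3 :: "(nat \<Rightarrow> nat) set" where
  "S3 = {p. p permutes {0,1,2}}"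

definition CS3 :: "((nat \<Rightarrow> nat) \<Rightarrow> complex) set" where
  "CS3 = {a. \<forall>g. g \<notin> S3 \<longrightarrow> a g = 0}"

definition alg_add :: "((nat \<Rightarrow> nat) \<Rightarrow> complex) \<Rightarrow> ((nat \<Rightarrow> nat) \<Rightarrow> complex) \<Rightarrow> ((nat \<Rightarrow> nat) \<Rightarrow> complex)" where
  "alg_add a b = (\<lambda>g. a g + b g)"

definition alg_scale :: "complex \<Rightarrow> ((nat \<Rightarrow> nat) \<Rightarrow> complex) \<Rightarrow> ((nat \<Rightarrow> nat) \<Rightarrow> complex)" where
  "alg_scale c a = (\<lambda>g. c * a g)"

definition conv :: "((nat \<Rightarrow> nat) \<Rightarrow> complex) \<Rightarrow> ((nat \<Rightarrow> nat) \<Rightarrow> complex) \<Rightarrow> ((nat \<Rightarrow> nat) \<Rightarrow> complex)" where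
  "conv a b = (\<lambda>g. if g \<in> S3 then (\<Sum>h\<in>S3. a h * b (inv h \<circ> g)) else 0)"

text \<open>Involution: (sum a_g g)^* = sum conj(a_g) g^-1 (corresponds to the
  conjugate transpose under the identification with M2(C)+C+C by unitary irreps).\<close>
definition alg_star :: "((nat \<Rightarrow> nat) \<Rightarrow> complex) \<Rightarrow> ((nat \<Rightarrow> nat) \<Rightarrow> complex)" where
  "alg_star a = (\<lambda>g. if g \<in> S3 then cnj (a (inv g)) else 0)"

definition delta :: "(nat \<Rightarrow> nat) \<Rightarrow> ((nat \<Rightarrow> nat) \<Rightarrow> complex)" where
  "delta h = (\<lambda>g. if g = h then 1 else 0)"

definition cadj :: "complex^'n^'n \<Rightarrow> complex^'n^'n" where
  "cadj A = (\<chi> i j. cnj (A $ j $ i))"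

definition mscale :: "complex \<Rightarrow> complex^'n^'n \<Rightarrow> complex^'n^'n" where
  "mscale c A = (\<chi> i j. c * A $ i $ j)"

definition comm :: "complex^'n^'n \<Rightarrow> complex^'n^'n \<Rightarrow> complex^'n^'n" where
  "comm A B = A ** B - B ** A"

definition cspan :: "(complex^'n^'n) set \<Rightarrow> (complex^'n^'n) set" where
  "cspan S = {x. \<exists>l :: (complex \<times> (complex^'n^'n)) list.
      set (map snd l) \<subseteq> S \<and> x = sum_list (map (\<lambda>(c,m). mscale c m) l)}"

definition star_rep :: "(((nat \<Rightarrow> nat) \<Rightarrow> complex) \<Rightarrow> complex^'n^'n) \<Rightarrow> bool" where
  "star_rep \<pi> \<longleftrightarrow>
     (\<forall>a\<in>CS3. \<forall>b\<in>CS3. \<pi> (alg_add a b) = \<pi> a + \<pi> b) \<and>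
     (\<forall>c. \<forall>a\<in>CS3. \<pi> (alg_scale c a) = mscale c (\<pi> a)) \<and>
     (\<forall>a\<in>CS3. \<forall>b\<in>CS3. \<pi> (conv a b) = \<pi> a ** \<pi> b) \<and>
     (\<forall>a\<in>CS3. \<pi> (alg_star a) = cadj (\<pi> a)) \<and>
     \<pi> (delta id) = mat 1 \<and>
     inj_on \<pi> CS3"

definition real_structure :: "(complex^'n \<Rightarrow> complex^'n) \<Rightarrow> bool" where
  "real_structure J \<longleftrightarrow>
     (\<forall>x y. J (x + y) = J x + J y) \<and>
     (\<forall>c x. J (c *s x) = cnj c *s J x) \<and>
     (\<forall>x. norm (J x) = norm x) \<and>
     (\<forall>x. J (J x) = x)"

definition op0 :: "(complex^'n \<Rightarrow> complex^'n) \<Rightarrow> (((nat \<Rightarrow> nat) \<Rightarrow> complex) \<Rightarrow> complex^'n^'n)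
     \<Rightarrow> ((nat \<Rightarrow> nat) \<Rightarrow> complex) \<Rightarrow> complex^'n \<Rightarrow> complex^'n" where
  "op0 J \<pi> b = (\<lambda>x. J (cadj (\<pi> b) *v J x))"

definition order_zero :: "(complex^'n \<Rightarrow> complex^'n) \<Rightarrow> (((nat \<Rightarrow> nat) \<Rightarrow> complex) \<Rightarrow> complex^'n^'n) \<Rightarrow> bool" where
  "order_zero J \<pi> \<longleftrightarrow>
     (\<forall>a\<in>CS3. \<forall>b\<in>CS3. \<forall>x. op0 J \<pi> (conv a b) x = op0 J \<pi> b (op0 J \<pi> a x)) \<and>
     (\<forall>a\<in>CS3. \<forall>b\<in>CS3. \<forall>x. \<pi> a *v op0 J \<pi> b x = op0 J \<pi> b (\<pi> a *v x))"

definition grading :: "(complex^'n \<Rightarrow> complex^'n) \<Rightarrow> (((nat \<Rightarrow> nat) \<Rightarrow> complex) \<Rightarrow> complex^'n^'n)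
     \<Rightarrow> complex^'n^'n \<Rightarrow> bool" where
  "grading J \<pi> \<gamma> \<longleftrightarrow>
     cadj \<gamma> = \<gamma> \<and> \<gamma> ** \<gamma> = mat 1 \<and>
     (\<forall>x. J (\<gamma> *v x) = \<gamma> *v J x) \<and>
     (\<forall>a\<in>CS3. \<gamma> ** \<pi> a = \<pi> a ** \<gamma>) \<and>
     (\<exists>l. set l \<subseteq> CS3 \<times> CS3 \<and>
        (\<forall>x. \<gamma> *v x = sum_list (map (\<lambda>(p,q). \<pi> p *v op0 J \<pi> q x) l)))"

definition dirac :: "(complex^'n \<Rightarrow> complex^'n) \<Rightarrow> (((nat \<Rightarrow> nat) \<Rightarrow> complex) \<Rightarrow> complex^'n^'n)
     \<Rightarrow> complex^'n^'n \<Rightarrow> complex^'n^'n \<Rightarrow> bool" where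
  "dirac J \<pi> \<gamma> D \<longleftrightarrow>
     cadj D = D \<and>
     (\<forall>x. D *v J x = J (D *v x)) \<and>
     D ** \<gamma> = - (\<gamma> ** D) \<and>
     (\<forall>a\<in>CS3. \<forall>b\<in>CS3. \<forall>x.
        comm D (\<pi> a) *v op0 J \<pi> b x = op0 J \<pi> b (comm D (\<pi> a) *v x))"

definition OmegaD :: "(((nat \<Rightarrow> nat) \<Rightarrow> complex) \<Rightarrow> complex^'n^'n) \<Rightarrow> complex^'n^'n \<Rightarrow> (complex^'n^'n) set" where
  "OmegaD \<pi> D = cspan {\<pi> a ** comm D (\<pi> b) | a b. a \<in> CS3 \<and> b \<in> CS3}"

definition dD :: "(((nat \<Rightarrow> nat) \<Rightarrow> complex) \<Rightarrow> complex^'n^'n) \<Rightarrow> complex^'n^'n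
     \<Rightarrow> ((nat \<Rightarrow> nat) \<Rightarrow> complex) \<Rightarrow> complex^'n^'n" where
  "dD \<pi> D a = comm D (\<pi> a)"

text \<open>A first-order differential calculus over CS3 carried by the type 'w:
  complex scalar multiplication sc, left action lm, right action rm,
  differential d.\<close>
definition fodc :: "(complex \<Rightarrow> 'w::ab_group_add \<Rightarrow> 'w)
    \<Rightarrow> (((nat \<Rightarrow> nat) \<Rightarrow> complex) \<Rightarrow> 'w \<Rightarrow> 'w)
    \<Rightarrow> ('w \<Rightarrow> ((nat \<Rightarrow> nat) \<Rightarrow> complex) \<Rightarrow> 'w)
    \<Rightarrow> (((nat \<Rightarrow> nat) \<Rightarrow> complex) \<Rightarrow> 'w) \<Rightarrow> bool" where
  "fodc sc lm rm d \<longleftrightarrow>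
     (\<forall>c x y. sc c (x + y) = sc c x + sc c y) \<and>
     (\<forall>c e x. sc (c + e) x = sc c x + sc e x) \<and>
     (\<forall>c e x. sc c (sc e x) = sc (c * e) x) \<and>
     (\<forall>x. sc 1 x = x) \<and>
     (\<forall>a\<in>CS3. \<forall>x y. lm a (x + y) = lm a x + lm a y \<and> rm (x + y) a = rm x a + rm y a) \<and>
     (\<forall>a\<in>CS3. \<forall>b\<in>CS3. \<forall>x. lm (alg_add a b) x = lm a x + lm b x \<and> rm x (alg_add a b) = rm x a + rm x b) \<and>
     (\<forall>a\<in>CS3. \<forall>c x. lm (alg_scale c a) x = sc c (lm a x) \<and> rm x (alg_scale c a) = sc c (rm x a)
        \<and> lm a (sc c x) = sc c (lm a x) \<and> rm (sc c x) a = sc c (rm x a)) \<and>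
     (\<forall>a\<in>CS3. \<forall>b\<in>CS3. \<forall>x. lm (conv a b) x = lm a (lm b x) \<and> rm x (conv a b) = rm (rm x a) b
        \<and> lm a (rm x b) = rm (lm a x) b) \<and>
     (\<forall>x. lm (delta id) x = x \<and> rm x (delta id) = x) \<and>
     (\<forall>a\<in>CS3. \<forall>b\<in>CS3. d (alg_add a b) = d a + d b) \<and>
     (\<forall>a\<in>CS3. \<forall>c. d (alg_scale c a) = sc c (d a)) \<and>
     (\<forall>a\<in>CS3. \<forall>b\<in>CS3. d (conv a b) = lm a (d b) + rm (d a) b) \<and>
     (\<forall>x. \<exists>l. set l \<subseteq> CS3 \<times> CS3 \<and> x = sum_list (map (\<lambda>(a,b). lm a (d b)) l))"

text \<open>Since CS3 has the basis S3, an element of CS3 \<otimes> Omega (resp. Omega \<otimes> CS3)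
  is uniquely sum_{g in S3} g \<otimes> w_g (resp. sum_g w_g \<otimes> g) and is represented by the
  function g \<mapsto> w_g on S3.  dL, dR represent the left and right coactions in this way.
  Coproduct: Delta g = g \<otimes> g, counit eps g = 1.\<close>
definition bicovariant_fodc :: "(complex \<Rightarrow> 'w::ab_group_add \<Rightarrow> 'w)
    \<Rightarrow> (((nat \<Rightarrow> nat) \<Rightarrow> complex) \<Rightarrow> 'w \<Rightarrow> 'w)
    \<Rightarrow> ('w \<Rightarrow> ((nat \<Rightarrow> nat) \<Rightarrow> complex) \<Rightarrow> 'w)
    \<Rightarrow> (((nat \<Rightarrow> nat) \<Rightarrow> complex) \<Rightarrow> 'w)
    \<Rightarrow> ('w \<Rightarrow> (nat \<Rightarrow> nat) \<Rightarrow> 'w) \<Rightarrow> ('w \<Rightarrow> (nat \<Rightarrow> nat) \<Rightarrow> 'w) \<Rightarrow> bool" where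
  "bicovariant_fodc sc lm rm d dL dR \<longleftrightarrow>
     fodc sc lm rm d \<and>
     \<comment> \<open>linearity of the coactions\<close>
     (\<forall>x y. \<forall>g\<in>S3. dL (x + y) g = dL x g + dL y g \<and> dR (x + y) g = dR x g + dR y g) \<and>
     (\<forall>c x. \<forall>g\<in>S3. dL (sc c x) g = sc c (dL x g) \<and> dR (sc c x) g = sc c (dR x g)) \<and>
     \<comment> \<open>coassociativity: (id\<otimes>dL)dL = (Delta\<otimes>id)dL and (dR\<otimes>id)dR = (id\<otimes>Delta)dR\<close>
     (\<forall>x. \<forall>g\<in>S3. \<forall>h\<in>S3. dL (dL x g) h = (if h = g then dL x g else 0)) \<and>
     (\<forall>x. \<forall>g\<in>S3. \<forall>h\<in>S3. dR (dR x g) h = (if h = g then dR x g else 0)) \<and>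
     \<comment> \<open>counit: (eps\<otimes>id)dL = id and (id\<otimes>eps)dR = id\<close>
     (\<forall>x. (\<Sum>g\<in>S3. dL x g) = x \<and> (\<Sum>g\<in>S3. dR x g) = x) \<and>
     \<comment> \<open>the coactions commute: (id\<otimes>dR)dL = (dL\<otimes>id)dR\<close>
     (\<forall>x. \<forall>g\<in>S3. \<forall>h\<in>S3. dR (dL x g) h = dL (dR x h) g) \<and>
     \<comment> \<open>bicovariant bimodule: dL(a x b) = Delta(a) dL(x) Delta(b), same for dR\<close>
     (\<forall>a\<in>CS3. \<forall>b\<in>CS3. \<forall>x. \<forall>g\<in>S3.
        dL (rm (lm a x) b) g =
          (\<Sum>h\<in>S3. \<Sum>k\<in>S3. sc (a h * b k) (rm (lm (delta h) (dL x (inv h \<circ> g \<circ> inv k))) (delta k))) \<and>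
        dR (rm (lm a x) b) g =
          (\<Sum>h\<in>S3. \<Sum>k\<in>S3. sc (a h * b k) (rm (lm (delta h) (dR x (inv h \<circ> g \<circ> inv k))) (delta k)))) \<and>
     \<comment> \<open>dL(x dy) = Delta(x)(id\<otimes>d)Delta(y), dR(x dy) = Delta(x)(d\<otimes>id)Delta(y)\<close>
     (\<forall>a\<in>CS3. \<forall>b\<in>CS3. \<forall>g\<in>S3.
        dL (lm a (d b)) g = (\<Sum>h\<in>S3. sc (a h * b (inv h \<circ> g)) (lm (delta h) (d (delta (inv h \<circ> g))))) \<and>
        dR (lm a (d b)) g = (\<Sum>h\<in>S3. sc (a h * b (inv h \<circ> g)) (lm (delta h) (d (delta (inv h \<circ> g))))))"

definition calc_iso :: "(((nat \<Rightarrow> nat) \<Rightarrow> complex) \<Rightarrow> complex^'n^'n) \<Rightarrow> complex^'n^'n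
    \<Rightarrow> (complex \<Rightarrow> 'w::ab_group_add \<Rightarrow> 'w)
    \<Rightarrow> (((nat \<Rightarrow> nat) \<Rightarrow> complex) \<Rightarrow> 'w \<Rightarrow> 'w)
    \<Rightarrow> ('w \<Rightarrow> ((nat \<Rightarrow> nat) \<Rightarrow> complex) \<Rightarrow> 'w)
    \<Rightarrow> (((nat \<Rightarrow> nat) \<Rightarrow> complex) \<Rightarrow> 'w) \<Rightarrow> (complex^'n^'n \<Rightarrow> 'w) \<Rightarrow> bool" where
  "calc_iso \<pi> D sc lm rm d \<phi> \<longleftrightarrow>
     bij_betw \<phi> (OmegaD \<pi> D) UNIV \<and>
     (\<forall>x\<in>OmegaD \<pi> D. \<forall>y\<in>OmegaD \<pi> D. \<phi> (x + y) = \<phi> x + \<phi> y) \<and>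
     (\<forall>c. \<forall>x\<in>OmegaD \<pi> D. \<phi> (mscale c x) = sc c (\<phi> x)) \<and>
     (\<forall>a\<in>CS3. \<forall>x\<in>OmegaD \<pi> D. \<phi> (\<pi> a ** x) = lm a (\<phi> x) \<and> \<phi> (x ** \<pi> a) = rm (\<phi> x) a) \<and>
     (\<forall>a\<in>CS3. \<phi> (dD \<pi> D a) = d a)"

end

theory Submission
  imports Defs "HOL-Library.Function_Algebras"
begin

text \<open>Let e be the central idempotent of CS3 cutting out the block M2(C).
  On the spectral triple side, every X in Omega_D anticommutes with \<gamma> and commutes with the
  opposite representation. Since \<gamma> is a sum of terms \<pi>(p) \<pi>0(q) and commutes with \<pi>, it may be
  averaged over conjugation by the group, turning each p into a central element, which acts on
  the range of \<pi>(e) by a scalar. So on that range \<gamma> acts like an element commuting with X,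
  and \<pi>(e) X \<pi>(e) both commutes and anticommutes with the invertible \<gamma>: it vanishes.
  On the Hopf algebra side, a left-covariant bimodule is spanned by left translates of
  left-invariant forms y, and the left coaction of e y e at the identity is
  (4 y + c y c\<inverse> + c\<inverse> y c) / 9 for a 3-cycle c. If e y e = 0 for all y, this invertible
  circulant system forces every left-invariant form, hence the whole bimodule, to vanish.
  An isomorphism would transport e Omega_D e = 0, so Omega_D would be zero.\<close>

definition rot :: "nat \<Rightarrow> nat" where
  "rot = (\<lambda>n. if n = 0 then 1 else if n = 1 then 2 else if n = 2 then 0 else n)"
definition rot2 :: "nat \<Rightarrow> nat" where
  "rot2 = (\<lambda>n. if n = 0 then 2 else if n = 1 then 0 else if n = 2 then 1 else n)"
definition swap01 :: "nat \<Rightarrow> nat" where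
  "swap01 = (\<lambda>n. if n = 0 then 1 else if n = 1 then 0 else n)"
definition swap02 :: "nat \<Rightarrow> nat" where
  "swap02 = (\<lambda>n. if n = 0 then 2 else if n = 2 then 0 else n)"
definition swap12 :: "nat \<Rightarrow> nat" where
  "swap12 = (\<lambda>n. if n = 1 then 2 else if n = 2 then 1 else n)"

lemmas S3_elem_defs = rot_def rot2_def swap01_def swap02_def swap12_def

lemma fun_neq_at: "f n \<noteq> g n \<Longrightarrow> f \<noteq> g"
  by auto

lemma S3_elems_distinct [simp]:
  "rot \<noteq> id" "rot2 \<noteq> id" "swap01 \<noteq> id" "swap02 \<noteq> id" "swap12 \<noteq> id"
  "id \<noteq> rot" "id \<noteq> rot2" "id \<noteq> swap01" "id \<noteq> swap02" "id \<noteq> swap12"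
  "rot \<noteq> rot2" "rot \<noteq> swap01" "rot \<noteq> swap02" "rot \<noteq> swap12"
  "rot2 \<noteq> rot" "rot2 \<noteq> swap01" "rot2 \<noteq> swap02" "rot2 \<noteq> swap12"
  "swap01 \<noteq> rot" "swap01 \<noteq> rot2" "swap01 \<noteq> swap02" "swap01 \<noteq> swap12"
  "swap02 \<noteq> rot" "swap02 \<noteq> rot2" "swap02 \<noteq> swap01" "swap02 \<noteq> swap12"
  "swap12 \<noteq> rot" "swap12 \<noteq> rot2" "swap12 \<noteq> swap01" "swap12 \<noteq> swap02"
  by (rule fun_neq_at[of _ 0] fun_neq_at[of _ 1]; simp add: S3_elem_defs)+

lemma S3_mult_table [simp]:
  "rot \<circ> rot = rot2"       "rot \<circ> rot2 = id"        "rot \<circ> swap01 = swap02"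
  "rot \<circ> swap02 = swap12"  "rot \<circ> swap12 = swap01"
  "rot2 \<circ> rot = id"        "rot2 \<circ> rot2 = rot"       "rot2 \<circ> swap01 = swap12"
  "rot2 \<circ> swap02 = swap01" "rot2 \<circ> swap12 = swap02"
  "swap01 \<circ> rot = swap12"  "swap01 \<circ> rot2 = swap02" "swap01 \<circ> swap01 = id"
  "swap01 \<circ> swap02 = rot2" "swap01 \<circ> swap12 = rot"
  "swap02 \<circ> rot = swap01"  "swap02 \<circ> rot2 = swap12" "swap02 \<circ> swap01 = rot"
  "swap02 \<circ> swap02 = id"   "swap02 \<circ> swap12 = rot2"
  "swap12 \<circ> rot = swap02"  "swap12 \<circ> rot2 = swap01" "swap12 \<circ> swap01 = rot2"
  "swap12 \<circ> swap02 = rot"  "swap12 \<circ> swap12 = id"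
  by (rule ext, simp add: S3_elem_defs)+

lemma S3_inv_table [simp]:
  "inv rot = rot2" "inv rot2 = rot" "inv swap01 = swap01" "inv swap02 = swap02" "inv swap12 = swap12"
  by (rule inv_unique_comp; simp)+

lemma permutes_of_inverse:
  assumes "f \<circ> g = id" "g \<circ> f = id" "\<And>x. x \<notin> S \<Longrightarrow> f x = x"
  shows "f permutes S"
  using o_bij[OF assms(2,1)] assms(3) unfolding permutes_def bij_iff by blast

lemma S3_eq: "S3 = {id, rot, rot2, swap01, swap02, swap12}"
proof (rule card_subset_eq[symmetric])
  show "finite S3"
    unfolding S3_def by (simp add: finite_permutations)
  show "card {id, rot, rot2, swap01, swap02, swap12} = card S3"
    unfolding S3_def by (simp add: card_permutations)
  have "rot permutes {0, 1, 2}" "rot2 permutes {0, 1, 2}" "swap01 permutes {0, 1, 2}"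
    "swap02 permutes {0, 1, 2}" "swap12 permutes {0, 1, 2}"
    by (rule permutes_of_inverse[of _ rot2] permutes_of_inverse[of _ rot]
        permutes_of_inverse[of _ swap01] permutes_of_inverse[of _ swap02]
        permutes_of_inverse[of _ swap12], simp, simp, simp add: S3_elem_defs)+
  then show "{id, rot, rot2, swap01, swap02, swap12} \<subseteq> S3"
    unfolding S3_def by simp
qed

lemma S3_closed [simp]:
  "id \<in> S3" "g \<in> S3 \<Longrightarrow> inv g \<in> S3" "g \<in> S3 \<Longrightarrow> h \<in> S3 \<Longrightarrow> g \<circ> h \<in> S3"
  by (simp_all add: S3_def permutes_inv permutes_compose)

lemma S3_inv_simps [simp]:
  "g \<in> S3 \<Longrightarrow> inv g \<circ> g = id" "g \<in> S3 \<Longrightarrow> g \<circ> inv g = id" "g \<in> S3 \<Longrightarrow> inv (inv g) = g"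
  by (simp_all add: S3_def permutes_inv_o permutes_inv_inv)

lemma S3_inv_comp [simp]: "g \<in> S3 \<Longrightarrow> h \<in> S3 \<Longrightarrow> inv (g \<circ> h) = inv h \<circ> inv g"
  by (simp add: S3_def permutes_bij o_inv_distrib)

lemma S3_elems [simp]: "rot \<in> S3" "rot2 \<in> S3" "swap01 \<in> S3" "swap02 \<in> S3" "swap12 \<in> S3"
  by (simp_all add: S3_eq)

lemma finite_S3 [simp]: "finite S3"
  by (simp add: S3_eq)

lemma sum_S3: "(\<Sum>g\<in>S3. f g) = f id + f rot + f rot2 + f swap01 + f swap02 + f swap12"
  by (simp add: S3_eq add.assoc)

lemma S3_cases [consumes 1, case_names id rot rot2 swap01 swap02 swap12]:
  "g \<in> S3 \<Longrightarrow> (g = id \<Longrightarrow> P) \<Longrightarrow> (g = rot \<Longrightarrow> P) \<Longrightarrow> (g = rot2 \<Longrightarrow> P)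
    \<Longrightarrow> (g = swap01 \<Longrightarrow> P) \<Longrightarrow> (g = swap02 \<Longrightarrow> P) \<Longrightarrow> (g = swap12 \<Longrightarrow> P) \<Longrightarrow> P"
  unfolding S3_eq by blast

lemma S3_inv_comp_eq_iff: "g \<in> S3 \<Longrightarrow> h \<in> S3 \<Longrightarrow> inv g \<circ> k = h \<longleftrightarrow> k = g \<circ> h"
  by (metis S3_inv_simps(1,2) comp_assoc id_comp)

lemma S3_comp_inv_eq_iff: "g \<in> S3 \<Longrightarrow> h \<in> S3 \<Longrightarrow> k \<circ> inv g = h \<longleftrightarrow> k = h \<circ> g"
  by (metis S3_inv_simps(1,2) comp_assoc comp_id)

lemma S3_comp_eq_self_iff:
  "g \<in> S3 \<Longrightarrow> h \<in> S3 \<Longrightarrow> h \<circ> g = g \<longleftrightarrow> h = id"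
  "g \<in> S3 \<Longrightarrow> h \<in> S3 \<Longrightarrow> g \<circ> h = g \<longleftrightarrow> h = id"
  by (metis S3_comp_inv_eq_iff S3_inv_simps(2), metis S3_inv_comp_eq_iff S3_inv_simps(1))

lemma delta_in_CS3 [simp]: "g \<in> S3 \<Longrightarrow> delta g \<in> CS3"
  by (auto simp: CS3_def delta_def)

lemma conv_in_CS3 [simp]: "conv a b \<in> CS3"
  by (simp add: CS3_def conv_def)

lemma sum_in_CS3: "(\<And>i. i \<in> I \<Longrightarrow> f i \<in> CS3) \<Longrightarrow> (\<Sum>i\<in>I. f i) \<in> CS3"
  by (induct I rule: infinite_finite_induct) (auto simp: CS3_def)

lemma conv_delta_left: "g \<in> S3 \<Longrightarrow> conv (delta g) a = (\<lambda>k. if k \<in> S3 then a (inv g \<circ> k) else 0)"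
  by (rule ext) (simp add: conv_def delta_def if_distrib[of "\<lambda>c. c * _"] cong: if_cong)

lemma conv_delta_right: "g \<in> S3 \<Longrightarrow> conv a (delta g) = (\<lambda>k. if k \<in> S3 then a (k \<circ> inv g) else 0)"
proof (rule ext)
  fix k assume g: "g \<in> S3"
  have "inv h \<circ> k = g \<longleftrightarrow> h = k \<circ> inv g" if "h \<in> S3" "k \<in> S3" for h
    using that g by (auto simp: S3_inv_comp_eq_iff S3_comp_inv_eq_iff comp_assoc)
  then show "conv a (delta g) k = (if k \<in> S3 then a (k \<circ> inv g) else 0)"
    using g by (simp add: conv_def delta_def if_distrib[of "\<lambda>c. _ * c"] cong: if_cong)
qed

lemma conv_delta_delta: "g \<in> S3 \<Longrightarrow> h \<in> S3 \<Longrightarrow> conv (delta g) (delta h) = delta (g \<circ> h)"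
  by (rule ext) (simp only: conv_delta_left, auto simp: delta_def S3_inv_comp_eq_iff)

lemma sum_fun_apply: "(\<Sum>i\<in>I. f i) x = (\<Sum>i\<in>I. f i x)"
  by (induct I rule: infinite_finite_induct) auto

definition class_sum :: "((nat \<Rightarrow> nat) \<Rightarrow> complex) \<Rightarrow> (nat \<Rightarrow> nat) \<Rightarrow> complex" where
  "class_sum a = (\<Sum>g\<in>S3. conv (conv (delta g) a) (delta (inv g)))"

lemma class_sum_apply: "class_sum a k = (if k \<in> S3 then \<Sum>g\<in>S3. a (inv g \<circ> k \<circ> g) else 0)"
  by (auto simp: class_sum_def sum_fun_apply conv_delta_left conv_delta_right comp_assoc)

lemma class_sum_in_CS3 [simp]: "class_sum a \<in> CS3"
  by (simp add: CS3_def class_sum_apply)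

text \<open>The central idempotent of the two-dimensional irreducible representation V of S3,
  (dim V / 6) \<Sum>g \<chi>V(g\<inverse>) g, where the character \<chi>V is 2, -1, 0 on the identity, the
  3-cycles and the transpositions.\<close>
definition std_idem :: "(nat \<Rightarrow> nat) \<Rightarrow> complex" where
  "std_idem g = (if g = id then 2/3 else if g = rot \<or> g = rot2 then -1/3 else 0)"

lemma std_idem_in_CS3 [simp]: "std_idem \<in> CS3"
  by (auto simp: CS3_def std_idem_def)

lemma std_idem_values [simp]:
  "std_idem id = 2/3" "std_idem rot = -1/3" "std_idem rot2 = -1/3"
  "std_idem swap01 = 0" "std_idem swap02 = 0" "std_idem swap12 = 0"
  by (simp_all add: std_idem_def)

lemma conv_std_idem_class_sum:
  "conv std_idem (class_sum a) = alg_scale (6 * a id - 3 * (a rot + a rot2)) std_idem"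
proof (rule ext)
  fix k
  show "conv std_idem (class_sum a) k = alg_scale (6 * a id - 3 * (a rot + a rot2)) std_idem k"
  proof (cases "k \<in> S3")
    case True
    then show ?thesis
      by (cases rule: S3_cases)
        (simp_all add: conv_def alg_scale_def sum_S3 class_sum_apply algebra_simps)
  qed (auto simp: conv_def alg_scale_def std_idem_def)
qed

locale bicovariant_calculus =
  fixes sc :: "complex \<Rightarrow> 'w::ab_group_add \<Rightarrow> 'w"
    and lm :: "((nat \<Rightarrow> nat) \<Rightarrow> complex) \<Rightarrow> 'w \<Rightarrow> 'w"
    and rm :: "'w \<Rightarrow> ((nat \<Rightarrow> nat) \<Rightarrow> complex) \<Rightarrow> 'w"
    and d :: "((nat \<Rightarrow> nat) \<Rightarrow> complex) \<Rightarrow> 'w"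
    and dL dR :: "'w \<Rightarrow> (nat \<Rightarrow> nat) \<Rightarrow> 'w"
  assumes bicovariant: "bicovariant_fodc sc lm rm d dL dR"
begin

lemma fodc: "fodc sc lm rm d"
  using bicovariant by (simp add: bicovariant_fodc_def)

lemma sc_add_right: "sc c (x + y) = sc c x + sc c y"
  and sc_add_left: "sc (c + e) x = sc c x + sc e x"
  and sc_sc: "sc c (sc e x) = sc (c * e) x"
  and sc_one [simp]: "sc 1 x = x"
  using fodc by (simp_all add: fodc_def)

lemma lm_add: "a \<in> CS3 \<Longrightarrow> lm a (x + y) = lm a x + lm a y"
  and rm_add: "a \<in> CS3 \<Longrightarrow> rm (x + y) a = rm x a + rm y a"
  and lm_conv: "a \<in> CS3 \<Longrightarrow> b \<in> CS3 \<Longrightarrow> lm (conv a b) x = lm a (lm b x)"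
  and rm_conv: "a \<in> CS3 \<Longrightarrow> b \<in> CS3 \<Longrightarrow> rm x (conv a b) = rm (rm x a) b"
  and lm_rm: "a \<in> CS3 \<Longrightarrow> b \<in> CS3 \<Longrightarrow> lm a (rm x b) = rm (lm a x) b"
  and lm_unit [simp]: "lm (delta id) x = x"
  and rm_unit [simp]: "rm x (delta id) = x"
  using fodc by (simp_all add: fodc_def)

lemma sc_zero_left [simp]: "sc 0 x = 0"
  using sc_add_left[of 0 0 x] by simp

lemma sc_zero_right [simp]: "sc c 0 = 0"
  using sc_add_right[of c 0 0] by simp

lemma lm_zero [simp]: "a \<in> CS3 \<Longrightarrow> lm a 0 = 0"
  using lm_add[of a 0 0] by simp

lemma rm_zero [simp]: "a \<in> CS3 \<Longrightarrow> rm 0 a = 0"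
  using rm_add[of a 0 0] by simp

lemma sc_eq_zero_cancel: "sc c x = 0 \<Longrightarrow> c \<noteq> 0 \<Longrightarrow> x = 0"
  using sc_sc[of "1 / c" c x] by simp

lemma dL_add: "g \<in> S3 \<Longrightarrow> dL (x + y) g = dL x g + dL y g"
  using bicovariant unfolding bicovariant_fodc_def by (elim conjE) blast

lemma dL_dL: "g \<in> S3 \<Longrightarrow> h \<in> S3 \<Longrightarrow> dL (dL x g) h = (if h = g then dL x g else 0)"
  using bicovariant unfolding bicovariant_fodc_def by (elim conjE) blast

lemma sum_dL: "(\<Sum>g\<in>S3. dL x g) = x"
  using bicovariant unfolding bicovariant_fodc_def by (elim conjE) blast

lemma dL_bimodule:
  "a \<in> CS3 \<Longrightarrow> b \<in> CS3 \<Longrightarrow> g \<in> S3 \<Longrightarrow> dL (rm (lm a x) b) g =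
     (\<Sum>h\<in>S3. \<Sum>k\<in>S3. sc (a h * b k) (rm (lm (delta h) (dL x (inv h \<circ> g \<circ> inv k))) (delta k)))"
  using bicovariant unfolding bicovariant_fodc_def by (elim conjE) blast

lemma dL_zero: "g \<in> S3 \<Longrightarrow> dL 0 g = 0"
  using dL_add[of g 0 0] by simp

lemma dL_translate:
  assumes "a \<in> S3" "b \<in> S3" "g \<in> S3"
  shows "dL (rm (lm (delta a) x) (delta b)) g = rm (lm (delta a) (dL x (inv a \<circ> g \<circ> inv b))) (delta b)"
proof -
  have "sc (delta a h * delta b k) y = (if k = b then if h = a then y else 0 else 0)" for h k y
    by (simp add: delta_def)
  then show ?thesis
    using assms by (simp add: dL_bimodule)
qed

definition left_invariant :: "'w \<Rightarrow> bool" where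
  "left_invariant y \<longleftrightarrow> (\<forall>h\<in>S3. dL y h = (if h = id then y else 0))"

definition adj :: "(nat \<Rightarrow> nat) \<Rightarrow> 'w \<Rightarrow> 'w" where
  "adj g y = rm (lm (delta g) y) (delta (inv g))"

lemma adj_id [simp]: "adj id y = y"
  by (simp add: adj_def)

lemma adj_adj: "g \<in> S3 \<Longrightarrow> h \<in> S3 \<Longrightarrow> adj g (adj h y) = adj (g \<circ> h) y"
  unfolding adj_def
  by (simp add: lm_rm rm_conv[symmetric] lm_conv[symmetric] conv_delta_delta)

lemma left_invariant_adj:
  assumes y: "left_invariant y" and g: "g \<in> S3"
  shows "left_invariant (adj g y)"
  unfolding left_invariant_def
proof
  fix h assume h: "h \<in> S3"
  have "inv g \<circ> h \<circ> g = id \<longleftrightarrow> h = id"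
    using g h by (simp add: comp_assoc S3_inv_comp_eq_iff S3_comp_eq_self_iff)
  then show "dL (adj g y) h = (if h = id then adj g y else 0)"
    using y g h by (simp add: adj_def dL_translate left_invariant_def)
qed

lemma left_invariant_component:
  assumes g: "g \<in> S3"
  shows "left_invariant (lm (delta (inv g)) (dL x g))"
  unfolding left_invariant_def
proof
  fix h assume h: "h \<in> S3"
  show "dL (lm (delta (inv g)) (dL x g)) h = (if h = id then lm (delta (inv g)) (dL x g) else 0)"
    using dL_translate[of "inv g" id h "dL x g"] g h by (simp add: dL_dL S3_comp_eq_self_iff)
qed

text \<open>Only the terms \<open>h \<circ> k = id\<close> of the coaction survive; their coefficients are
  \<open>std_idem h * std_idem (inv h)\<close>.\<close>
lemma dL_sandwich_std_idem:
  assumes "left_invariant y"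
  shows "dL (rm (lm std_idem y) std_idem) id = sc (4/9) y + sc (1/9) (adj rot y) + sc (1/9) (adj rot2 y)"
  using assms by (simp add: left_invariant_def dL_bimodule sum_S3 adj_def)

text \<open>The circulant matrix with first row (4/9, 1/9, 1/9) has eigenvalues 2/3, 1/3, 1/3.\<close>
lemma circulant_system_trivial:
  assumes "sc (4/9) y + sc (1/9) b + sc (1/9) c = 0"
    and "sc (4/9) b + sc (1/9) c + sc (1/9) y = 0"
    and "sc (4/9) c + sc (1/9) y + sc (1/9) b = 0"
  shows "y = 0"
proof -
  define s where "s = y + b + c"
  have four_ninths: "sc (4/9) x = sc (1/3) x + sc (1/9) x" for x
    using sc_add_left[of "1/3" "1/9" x] by simp
  have "sc (1/3) y + sc (1/9) s = 0" "sc (1/3) b + sc (1/9) s = 0" "sc (1/3) c + sc (1/9) s = 0"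
    using assms by (simp_all add: four_ninths s_def sc_add_right algebra_simps)
  moreover have "sc (2/3) s = (sc (1/3) y + sc (1/9) s) + (sc (1/3) b + sc (1/9) s) + (sc (1/3) c + sc (1/9) s)"
    using sc_add_left[of "1/3" "1/3" s] sc_add_left[of "1/9" "1/9" s] sc_add_left[of "2/9" "1/9" s]
    by (simp add: s_def sc_add_right algebra_simps)
  ultimately have "sc (2/3) s = 0"
    by simp
  then have "s = 0"
    by (rule sc_eq_zero_cancel) simp
  with \<open>sc (1/3) y + sc (1/9) s = 0\<close> have "sc (1/3) y = 0"
    by simp
  then show "y = 0"
    by (rule sc_eq_zero_cancel) simp
qed

lemma left_invariant_eq_zero:
  assumes vanish: "\<And>z. rm (lm std_idem z) std_idem = 0" and y: "left_invariant y"
  shows "y = 0"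
proof -
  have sandwich: "sc (4/9) z + sc (1/9) (adj rot z) + sc (1/9) (adj rot2 z) = 0" if "left_invariant z" for z
    using dL_sandwich_std_idem[OF that] vanish[of z] dL_zero[of id] by simp
  have "adj rot (adj rot y) = adj rot2 y" "adj rot2 (adj rot y) = y"
    "adj rot (adj rot2 y) = y" "adj rot2 (adj rot2 y) = adj rot y"
    by (simp_all add: adj_adj)
  then show "y = 0"
    using sandwich[OF y] sandwich[OF left_invariant_adj[OF y, of rot]]
      sandwich[OF left_invariant_adj[OF y, of rot2]]
    by (intro circulant_system_trivial[of y "adj rot y" "adj rot2 y"]) simp_all
qed

lemma trivial_if_std_idem_sandwich_vanishes:
  fixes x :: 'w
  assumes "\<And>z. rm (lm std_idem z) std_idem = 0"
  shows "x = 0"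
proof -
  have "dL x g = 0" if g: "g \<in> S3" for g
  proof -
    have "dL x g = lm (delta g) (lm (delta (inv g)) (dL x g))"
      using g by (simp add: lm_conv[symmetric] conv_delta_delta)
    also have "lm (delta (inv g)) (dL x g) = 0"
      using left_invariant_eq_zero[OF assms left_invariant_component[OF g]] .
    finally show ?thesis
      using g by simp
  qed
  then show "x = 0"
    using sum_dL[of x] by simp
qed

end

lemma mv_mscale: "mscale c A *v v = c *s (A *v v)"
  by (simp add: matrix_vector_mult_def vec_eq_iff mscale_def sum_distrib_left mult.assoc)

lemma mult_mscale_right: "B ** mscale c A = mscale c (B ** A)"
  by (simp add: matrix_matrix_mult_def vec_eq_iff mscale_def sum_distrib_left mult.left_commute)

lemma mv_uminus_right: "(A::'a::ring_1^'n^'m) *v (- v) = - (A *v v)"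
  using matrix_vector_mult_diff_distrib[of A 0 v] by simp

lemma vec_eq_neg_self: "(x::'a::field_char_0^'n) = - x \<Longrightarrow> x = 0"
  by (simp add: vec_eq_iff)

lemma mv_sum_left: "(\<Sum>i\<in>I. f i) *v v = (\<Sum>i\<in>I. f i *v v)"
  by (induct I rule: infinite_finite_induct) (simp_all add: matrix_vector_mult_add_rdistrib)

lemma mv_sum_list_right: "A *v sum_list (map f xs) = sum_list (map (\<lambda>x. A *v f x) xs)"
  by (induction xs) (simp_all add: matrix_vector_right_distrib)

lemma smult_sum_list: "(c::'a::semiring_1) *s sum_list (map f xs) = sum_list (map (\<lambda>x. c *s f x) xs)"
  by (induction xs) (simp_all add: vector_add_ldistrib)

lemma sum_sum_list_swap: "(\<Sum>i\<in>I. sum_list (map (f i) xs)) = sum_list (map (\<lambda>x. \<Sum>i\<in>I. f i x) xs)"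
  by (induction xs) (simp_all add: sum.distrib)

lemma cspan_induct [consumes 1, case_names zero add scale gen]:
  assumes "x \<in> cspan S"
    and "P 0"
    and "\<And>x y. P x \<Longrightarrow> P y \<Longrightarrow> P (x + y)"
    and "\<And>c x. P x \<Longrightarrow> P (mscale c x)"
    and "\<And>x. x \<in> S \<Longrightarrow> P x"
  shows "P x"
proof -
  obtain l where l: "set (map snd l) \<subseteq> S" "x = sum_list (map (\<lambda>(c, m). mscale c m) l)"
    using assms(1) unfolding cspan_def by blast
  from l(1) have "P (sum_list (map (\<lambda>(c, m). mscale c m) l))"
    by (induction l) (auto simp: assms(2-5) split_def)
  then show ?thesis
    using l(2) by simp
qed

lemma cspan_mult_left:
  assumes "x \<in> cspan S" "\<And>y. y \<in> S \<Longrightarrow> B ** y \<in> S"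
  shows "B ** x \<in> cspan S"
proof -
  obtain l where l: "set (map snd l) \<subseteq> S" "x = sum_list (map (\<lambda>(c, m). mscale c m) l)"
    using assms(1) unfolding cspan_def by blast
  let ?l = "map (\<lambda>(c, m). (c, B ** m)) l"
  have "set (map snd ?l) \<subseteq> S"
    using l(1) assms(2) by auto
  moreover have "B ** x = sum_list (map (\<lambda>(c, m). mscale c m) ?l)"
    unfolding l(2) by (induction l) (auto simp: matrix_add_ldistrib mult_mscale_right split_def)
  ultimately show ?thesis
    unfolding cspan_def by blast
qed

lemma OmegaD_zero: "0 \<in> OmegaD \<pi> D"
  unfolding OmegaD_def cspan_def by (rule CollectI, rule exI[of _ "[]"]) simp

lemma calc_iso_zero:
  assumes "calc_iso \<pi> D sc lm rm d \<phi>"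
  shows "\<phi> 0 = 0"
proof -
  have "\<phi> (0 + 0) = \<phi> 0 + \<phi> 0"
    using assms OmegaD_zero[of \<pi> D] by (simp only: calc_iso_def)
  then show ?thesis
    by simp
qed

lemma calc_iso_trivial_target:
  fixes \<phi> :: "complex^'n^'n \<Rightarrow> 'w::ab_group_add"
  assumes iso: "calc_iso \<pi> D sc lm rm d \<phi>" and trivial: "\<And>x::'w. x = 0"
  shows "OmegaD \<pi> D = {0}"
proof -
  have "inj_on \<phi> (OmegaD \<pi> D)"
    using iso by (simp add: calc_iso_def bij_betw_def)
  moreover have "\<phi> X = \<phi> 0" for X
    using trivial[of "\<phi> X"] trivial[of "\<phi> 0"] by simp
  ultimately have "X = 0" if "X \<in> OmegaD \<pi> D" for X
    using that OmegaD_zero by (blast dest: inj_onD)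
  then show ?thesis
    using OmegaD_zero by blast
qed

locale finite_spectral_triple =
  fixes \<pi> :: "((nat \<Rightarrow> nat) \<Rightarrow> complex) \<Rightarrow> complex^'n^'n"
    and J :: "complex^'n \<Rightarrow> complex^'n"
    and \<gamma> D :: "complex^'n^'n"
  assumes star_rep: "star_rep \<pi>"
    and real_structure: "real_structure J"
    and order_zero: "order_zero J \<pi>"
    and grading: "grading J \<pi> \<gamma>"
    and dirac: "dirac J \<pi> \<gamma> D"
begin

lemma pi_add: "a \<in> CS3 \<Longrightarrow> b \<in> CS3 \<Longrightarrow> \<pi> (a + b) = \<pi> a + \<pi> b"
  using star_rep by (simp add: star_rep_def alg_add_def plus_fun_def)

lemma pi_scale: "a \<in> CS3 \<Longrightarrow> \<pi> (alg_scale c a) = mscale c (\<pi> a)"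
  and pi_conv: "a \<in> CS3 \<Longrightarrow> b \<in> CS3 \<Longrightarrow> \<pi> (conv a b) = \<pi> a ** \<pi> b"
  and pi_unit: "\<pi> (delta id) = mat 1"
  using star_rep by (simp_all add: star_rep_def)

lemma pi_zero: "\<pi> 0 = 0"
  using pi_add[of 0 0] by (simp add: CS3_def)

lemma pi_sum: "(\<And>i. i \<in> I \<Longrightarrow> f i \<in> CS3) \<Longrightarrow> \<pi> (\<Sum>i\<in>I. f i) = (\<Sum>i\<in>I. \<pi> (f i))"
  by (induct I rule: infinite_finite_induct) (simp_all add: pi_zero pi_add sum_in_CS3)

lemma op0_add: "op0 J \<pi> b (x + y) = op0 J \<pi> b x + op0 J \<pi> b y"
  and op0_scale: "op0 J \<pi> b (c *s x) = c *s op0 J \<pi> b x"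
  using real_structure
  by (simp_all add: real_structure_def op0_def matrix_vector_right_distrib vector_scalar_commute)

lemma op0_zero: "op0 J \<pi> b 0 = 0"
  using op0_add[of b 0 0] by simp

lemma pi_op0_commute: "a \<in> CS3 \<Longrightarrow> b \<in> CS3 \<Longrightarrow> \<pi> a *v op0 J \<pi> b x = op0 J \<pi> b (\<pi> a *v x)"
  using order_zero by (simp add: order_zero_def)

lemma grading_squared: "\<gamma> ** \<gamma> = mat 1"
  using grading by (simp add: grading_def)

lemma grading_pi_commute: "a \<in> CS3 \<Longrightarrow> \<gamma> *v (\<pi> a *v v) = \<pi> a *v (\<gamma> *v v)"
  using grading by (simp add: grading_def matrix_vector_mul_assoc)

lemma grading_D_anticommute: "\<gamma> *v (D *v v) = - (D *v (\<gamma> *v v))"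
proof -
  have "\<gamma> ** D = - (D ** \<gamma>)"
    using dirac by (simp add: dirac_def)
  then show ?thesis
    using matrix_vector_mult_diff_rdistrib[of 0 "D ** \<gamma>" v] by (simp add: matrix_vector_mul_assoc)
qed

lemma first_order: "a \<in> CS3 \<Longrightarrow> b \<in> CS3 \<Longrightarrow> comm D (\<pi> a) *v op0 J \<pi> b x = op0 J \<pi> b (comm D (\<pi> a) *v x)"
  using dirac by (simp add: dirac_def)

definition commutes_with_op0 :: "complex^'n^'n \<Rightarrow> bool" where
  "commutes_with_op0 Y \<longleftrightarrow> (\<forall>b\<in>CS3. \<forall>v. Y *v op0 J \<pi> b v = op0 J \<pi> b (Y *v v))"

definition anticommutes_with_grading :: "complex^'n^'n \<Rightarrow> bool" where
  "anticommutes_with_grading Y \<longleftrightarrow> (\<forall>v. \<gamma> *v (Y *v v) = - (Y *v (\<gamma> *v v)))"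

lemma pi_commutes_with_op0: "a \<in> CS3 \<Longrightarrow> commutes_with_op0 (\<pi> a)"
  by (simp add: commutes_with_op0_def pi_op0_commute)

lemma OmegaD_commutes_with_op0:
  assumes "X \<in> OmegaD \<pi> D"
  shows "commutes_with_op0 X"
  using assms unfolding OmegaD_def
proof (induction rule: cspan_induct)
  case (gen X)
  then obtain a b where "a \<in> CS3" "b \<in> CS3" "X = \<pi> a ** comm D (\<pi> b)"
    by blast
  then show ?case
    by (simp add: commutes_with_op0_def first_order pi_op0_commute flip: matrix_vector_mul_assoc)
qed (simp_all add: commutes_with_op0_def matrix_vector_mult_add_rdistrib mv_mscale op0_add op0_scale op0_zero)

lemma OmegaD_anticommutes_with_grading:
  assumes "X \<in> OmegaD \<pi> D"
  shows "anticommutes_with_grading X"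
  using assms unfolding OmegaD_def
proof (induction rule: cspan_induct)
  case (gen X)
  then obtain a b where "a \<in> CS3" "b \<in> CS3" "X = \<pi> a ** comm D (\<pi> b)"
    by blast
  then show ?case
    by (simp add: anticommutes_with_grading_def comm_def matrix_vector_mult_diff_rdistrib
        matrix_vector_mult_diff_distrib grading_pi_commute grading_D_anticommute mv_uminus_right
        flip: matrix_vector_mul_assoc)
qed (simp_all add: anticommutes_with_grading_def matrix_vector_mult_add_rdistrib matrix_vector_right_distrib
    mv_mscale vector_scalar_commute vector_smult_rneg)

lemma OmegaD_mult_left:
  assumes "a \<in> CS3" "X \<in> OmegaD \<pi> D"
  shows "\<pi> a ** X \<in> OmegaD \<pi> D"
  using assms(2) unfolding OmegaD_def
proof (rule cspan_mult_left)
  fix Y assume "Y \<in> {\<pi> a ** comm D (\<pi> b) | a b. a \<in> CS3 \<and> b \<in> CS3}"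
  then obtain a' b where "a' \<in> CS3" "b \<in> CS3" "Y = \<pi> a' ** comm D (\<pi> b)"
    by blast
  then have "\<pi> a ** Y = \<pi> (conv a a') ** comm D (\<pi> b)"
    using assms(1) by (simp add: pi_conv matrix_mul_assoc)
  then show "\<pi> a ** Y \<in> {\<pi> a ** comm D (\<pi> b) | a b. a \<in> CS3 \<and> b \<in> CS3}"
    using \<open>b \<in> CS3\<close> conv_in_CS3 by blast
qed

lemma pi_delta_inv_cancel: "g \<in> S3 \<Longrightarrow> \<pi> (delta g) *v (\<pi> (delta (inv g)) *v v) = v"
  by (simp add: matrix_vector_mul_assoc pi_conv[symmetric] conv_delta_delta pi_unit)

lemma grading_conjugate:
  assumes l: "set l \<subseteq> CS3 \<times> CS3" "\<And>v. \<gamma> *v v = sum_list (map (\<lambda>(p, q). \<pi> p *v op0 J \<pi> q v) l)"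
    and g: "g \<in> S3"
  shows "\<gamma> *v v = sum_list (map (\<lambda>(p, q). \<pi> (conv (conv (delta g) p) (delta (inv g))) *v op0 J \<pi> q v) l)"
proof -
  have "\<gamma> *v v = \<pi> (delta g) *v (\<gamma> *v (\<pi> (delta (inv g)) *v v))"
    using g by (simp add: grading_pi_commute pi_delta_inv_cancel)
  also have "\<dots> = sum_list (map (\<lambda>(p, q). \<pi> (delta g) *v (\<pi> p *v op0 J \<pi> q (\<pi> (delta (inv g)) *v v))) l)"
    by (simp only: l(2) mv_sum_list_right split_def)
  also have "\<dots> = sum_list (map (\<lambda>(p, q). \<pi> (conv (conv (delta g) p) (delta (inv g))) *v op0 J \<pi> q v) l)"
    using l(1) g by (intro arg_cong[where f = sum_list] map_cong)
      (auto simp: pi_op0_commute[symmetric] pi_conv matrix_vector_mul_assoc matrix_mul_assoc)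
  finally show ?thesis .
qed

text \<open>Averaging over the conjugations by the unitaries \<pi>(g), which commute with \<gamma>,
  replaces each left factor of the grading by its class sum.\<close>
lemma grading_class_sum_expansion:
  assumes l: "set l \<subseteq> CS3 \<times> CS3" "\<And>v. \<gamma> *v v = sum_list (map (\<lambda>(p, q). \<pi> p *v op0 J \<pi> q v) l)"
  shows "6 *s (\<gamma> *v v) = sum_list (map (\<lambda>(p, q). \<pi> (class_sum p) *v op0 J \<pi> q v) l)"
proof -
  have "6 *s (\<gamma> *v v) = (\<Sum>g\<in>S3. \<gamma> *v v)"
    unfolding sum_S3 by (simp add: vec_eq_iff)
  also have "\<dots> = (\<Sum>g\<in>S3. sum_list (map (\<lambda>(p, q). \<pi> (conv (conv (delta g) p) (delta (inv g))) *v op0 J \<pi> q v) l))"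
    using grading_conjugate[OF l] by simp
  also have "\<dots> = sum_list (map (\<lambda>(p, q). \<pi> (class_sum p) *v op0 J \<pi> q v) l)"
    using l(1) by (auto simp: sum_sum_list_swap class_sum_def pi_sum mv_sum_left case_prod_beta
        intro!: arg_cong[where f = sum_list] map_cong)
  finally show ?thesis .
qed

text \<open>The centre of CS3 acts by scalars on the range of the central projection \<pi>(std_idem),
  so there \<gamma> acts like an operator in the bicommutant of the opposite representation.\<close>
lemma compressed_grading:
  obtains W where "\<And>Y v. commutes_with_op0 Y \<Longrightarrow> Y *v W v = W (Y *v v)"
    and "\<And>v. \<pi> std_idem *v (\<gamma> *v v) = \<pi> std_idem *v W v"
proof -
  obtain l where l: "set l \<subseteq> CS3 \<times> CS3"
    "\<And>v. \<gamma> *v v = sum_list (map (\<lambda>(p, q). \<pi> p *v op0 J \<pi> q v) l)"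
    using grading unfolding grading_def by blast
  define \<mu> where "\<mu> p = p id - (p rot + p rot2) / 2" for p :: "(nat \<Rightarrow> nat) \<Rightarrow> complex"
  define W where "W v = sum_list (map (\<lambda>(p, q). \<mu> p *s op0 J \<pi> q v) l)" for v
  have "Y *v W v = W (Y *v v)" if "commutes_with_op0 Y" for Y v
    using l(1) that unfolding W_def commutes_with_op0_def
    by (auto simp: mv_sum_list_right vector_scalar_commute case_prod_beta
        intro!: arg_cong[where f = sum_list] map_cong)
  moreover have "\<pi> std_idem *v (\<gamma> *v v) = \<pi> std_idem *v W v" for v
  proof -
    have "6 * p id - 3 * (p rot + p rot2) = 6 * \<mu> p" for p
      by (simp add: \<mu>_def field_simps)
    then have P_class_sum: "\<pi> std_idem *v (\<pi> (class_sum p) *v w) = \<pi> std_idem *v ((6 * \<mu> p) *s w)" for p w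
      by (simp add: matrix_vector_mul_assoc pi_conv[symmetric] conv_std_idem_class_sum pi_scale
          mv_mscale vector_scalar_commute)
    have "6 *s (\<pi> std_idem *v (\<gamma> *v v)) = \<pi> std_idem *v (6 *s (\<gamma> *v v))"
      by (simp add: vector_scalar_commute)
    also have "\<dots> = sum_list (map (\<lambda>(p, q). \<pi> std_idem *v (\<pi> (class_sum p) *v op0 J \<pi> q v)) l)"
      by (simp add: grading_class_sum_expansion[OF l] mv_sum_list_right split_def)
    also have "\<dots> = sum_list (map (\<lambda>(p, q). 6 *s (\<pi> std_idem *v (\<mu> p *s op0 J \<pi> q v))) l)"
      by (simp add: P_class_sum vector_scalar_commute vector_smult_assoc split_def)
    also have "\<dots> = 6 *s (\<pi> std_idem *v W v)"
      by (simp add: W_def mv_sum_list_right smult_sum_list split_def)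
    finally show ?thesis
      by simp
  qed
  ultimately show thesis
    by (rule that)
qed

lemma std_idem_compression_OmegaD:
  assumes X: "X \<in> OmegaD \<pi> D"
  shows "\<pi> std_idem ** X ** \<pi> std_idem = 0"
proof -
  define P where "P = \<pi> std_idem"
  obtain W where W_comm: "\<And>Y v. commutes_with_op0 Y \<Longrightarrow> Y *v W v = W (Y *v v)"
    and P_grading: "\<And>v. P *v (\<gamma> *v v) = P *v W v"
    using compressed_grading unfolding P_def by blast
  define Y where "Y = P ** X ** P"
  have Y_apply: "Y *v v = P *v (X *v (P *v v))" for v
    by (simp add: Y_def matrix_vector_mul_assoc matrix_mul_assoc)
  have P_comm: "commutes_with_op0 P" and X_comm: "commutes_with_op0 X"
    using OmegaD_commutes_with_op0[OF X] by (simp_all add: P_def pi_commutes_with_op0)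
  have \<gamma>P: "\<gamma> *v (P *v v) = P *v (\<gamma> *v v)" for v
    by (simp add: P_def grading_pi_commute)
  have "Y *v (\<gamma> *v v) = 0" for v
  proof -
    have "Y *v (\<gamma> *v v) = P *v W (X *v (P *v v))"
      using P_grading W_comm[OF P_comm] W_comm[OF X_comm] by (simp add: Y_apply)
    also have "\<dots> = \<gamma> *v (Y *v v)"
      using P_grading by (simp add: Y_apply \<gamma>P)
    also have "\<dots> = - (Y *v (\<gamma> *v v))"
      using OmegaD_anticommutes_with_grading[OF X]
      by (simp add: anticommutes_with_grading_def Y_apply \<gamma>P mv_uminus_right)
    finally have "Y *v (\<gamma> *v v) = - (Y *v (\<gamma> *v v))" .
    then show ?thesis
      by (rule vec_eq_neg_self)
  qed
  moreover have "Y *v v = Y *v (\<gamma> *v (\<gamma> *v v))" for v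
    by (simp add: matrix_vector_mul_assoc grading_squared)
  ultimately have "Y *v v = 0 *v v" for v
    by simp
  then show ?thesis
    by (simp add: matrix_eq Y_def P_def)
qed

lemma calc_iso_std_idem_sandwich:
  assumes iso: "calc_iso \<pi> D sc lm rm d \<phi>"
  shows "rm (lm std_idem y) std_idem = 0"
proof -
  obtain X where X: "X \<in> OmegaD \<pi> D" "y = \<phi> X"
    using iso unfolding calc_iso_def bij_betw_def by blast
  have "rm (lm std_idem y) std_idem = \<phi> (\<pi> std_idem ** X ** \<pi> std_idem)"
    using iso X OmegaD_mult_left[OF std_idem_in_CS3 X(1)] by (simp add: calc_iso_def)
  also have "\<dots> = 0"
    using std_idem_compression_OmegaD[OF X(1)] calc_iso_zero[OF iso] by simp
  finally show ?thesis .
qed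

end

theorem mainTheorem18:
  fixes \<pi> :: "((nat \<Rightarrow> nat) \<Rightarrow> complex) \<Rightarrow> complex^'n^'n"
    and J :: "complex^'n \<Rightarrow> complex^'n"
    and \<gamma> D :: "complex^'n^'n"
  assumes "star_rep \<pi>"
    and "real_structure J"
    and "order_zero J \<pi>"
    and "grading J \<pi> \<gamma>"
    and "dirac J \<pi> \<gamma> D"
    and "OmegaD \<pi> D \<noteq> {0}"
  shows "\<not> (\<exists>(sc :: complex \<Rightarrow> 'w::ab_group_add \<Rightarrow> 'w) lm rm d dL dR \<phi>.
            bicovariant_fodc sc lm rm d dL dR \<and> calc_iso \<pi> D sc lm rm d \<phi>)"
proof
  assume "\<exists>(sc :: complex \<Rightarrow> 'w \<Rightarrow> 'w) lm rm d dL dR \<phi>.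
    bicovariant_fodc sc lm rm d dL dR \<and> calc_iso \<pi> D sc lm rm d \<phi>"
  then obtain sc :: "complex \<Rightarrow> 'w \<Rightarrow> 'w" and lm rm d dL dR \<phi>
    where bic: "bicovariant_fodc sc lm rm d dL dR" and iso: "calc_iso \<pi> D sc lm rm d \<phi>"
    by blast
  interpret triple: finite_spectral_triple \<pi> J \<gamma> D
    using assms(1-5) by unfold_locales
  interpret calculus: bicovariant_calculus sc lm rm d dL dR
    using bic by unfold_locales
  have "x = 0" for x :: 'w
    using triple.calc_iso_std_idem_sandwich[OF iso] by (rule calculus.trivial_if_std_idem_sandwich_vanishes)
  then have "OmegaD \<pi> D = {0}"
    by (rule calc_iso_trivial_target[OF iso])
  with assms(6) show False ..
qed

end
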